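(* Assume there exists a $1$-perfect code in $H(q+1,q)$. Let $f$ be a $(b,c)$-coloring of $H(n,q)$ with main eigenvalue $\lambda$ such that the set of vertices of color $1$ can be partitioned into $k$-faces. Then: (1) if $\lambda+k\le0$, then for every $t\in\{1,\dots,q\}$ there is a $(q(b+c)-tc,\ tc)$-coloring of $H(qn-\lambda-k,q)$, with main eigenvalue $\lambda-k(q-1)$; (2) if $\lambda\le k(q-1)$, then for every $t\in\{1,\dots,q\}$ there is a $(q(b+c)-tc,\ tc)$-coloring of $H(qn-\lambda+k(q-1),q)$, with main eigenvalue $\lambda+k(q-1)^2$.
   Context: The Hamming graph $H(n,q)$ has vertex set $\mathbb{Z}_q^n$, two vertices adjacent iff they differ in exactly one coordinate. A $k$-face is a set of vertices obtained by fixing $n-k$ coordinates and letting the other $k$ coordinates range over $\mathbb{Z}_q$. A $(b,c)$-coloring of $H(n,q)$ is a surjective map onto $\{1,2\}$ in which each color-1 vertex has exactly $b$ neighbours of color 2 and each color-2 vertex has exactly $c$ neighbours of color 1; its main eigenvalue is $\lambda=n(q-1)-(b+c)$. A $1$-perfect code in $H(n,q)$ is a set $C$ of vertices such that every radius-$1$ Hamming ball contains exactly one element of $C$. *)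

theory Defs
  imports Main
begin

definition ham_vertices :: "nat \<Rightarrow> nat \<Rightarrow> nat list set" where
  "ham_vertices n q = {x. length x = n \<and> (\<forall>i<n. x ! i < q)}"

definition ham_adj :: "nat list \<Rightarrow> nat list \<Rightarrow> bool" where
  "ham_adj x y \<longleftrightarrow> length x = length y \<and> card {i. i < length x \<and> x ! i \<noteq> y ! i} = 1"

definition ham_nbrs :: "nat \<Rightarrow> nat \<Rightarrow> nat list \<Rightarrow> nat list set" where
  "ham_nbrs n q x = {y \<in> ham_vertices n q. ham_adj x y}"

definition is_coloring :: "nat \<Rightarrow> nat \<Rightarrow> nat \<Rightarrow> nat \<Rightarrow> (nat list \<Rightarrow> nat) \<Rightarrow> bool" where
  "is_coloring n q b c f \<longleftrightarrow>
     f ` ham_vertices n q = {1, 2} \<and>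
     (\<forall>x\<in>ham_vertices n q. f x = 1 \<longrightarrow> card {y \<in> ham_nbrs n q x. f y = 2} = b) \<and>
     (\<forall>x\<in>ham_vertices n q. f x = 2 \<longrightarrow> card {y \<in> ham_nbrs n q x. f y = 1} = c)"

definition main_eigenvalue :: "nat \<Rightarrow> nat \<Rightarrow> nat \<Rightarrow> nat \<Rightarrow> int" where
  "main_eigenvalue n q b c = int n * (int q - 1) - (int b + int c)"

definition is_face :: "nat \<Rightarrow> nat \<Rightarrow> nat \<Rightarrow> nat list set \<Rightarrow> bool" where
  "is_face n q k F \<longleftrightarrow> (\<exists>K x. K \<subseteq> {..<n} \<and> card K = k \<and> x \<in> ham_vertices n q \<and>
      F = {y \<in> ham_vertices n q. \<forall>i<n. i \<notin> K \<longrightarrow> y ! i = x ! i})"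

definition face_partitionable :: "nat \<Rightarrow> nat \<Rightarrow> nat \<Rightarrow> nat list set \<Rightarrow> bool" where
  "face_partitionable n q k S \<longleftrightarrow> (\<exists>P. (\<forall>F\<in>P. is_face n q k F) \<and>
      (\<forall>F\<in>P. \<forall>G\<in>P. F \<noteq> G \<longrightarrow> F \<inter> G = {}) \<and> \<Union>P = S)"

definition perfect_code1 :: "nat \<Rightarrow> nat \<Rightarrow> nat list set \<Rightarrow> bool" where
  "perfect_code1 n q C \<longleftrightarrow> C \<subseteq> ham_vertices n q \<and>
     (\<forall>x\<in>ham_vertices n q. card (C \<inter> ({x} \<union> ham_nbrs n q x)) = 1)"

end

theory Submission
  imports Defs "HOL-Number_Theory.Cong"
begin

(*
  A 1-perfect code C of H(q + 1, q) has minimum distance 3 and q ^ (q - 1) codewords, so it is the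
  graph of a function of the first q - 1 coordinates. Completing a word B of H(q, q) to the codeword
  c(B) that agrees with B there gives two symbols sigma(B) = B(q-1) + c(B)(q-1) mod q and
  rho(B) = c(B)(q), and the q (q - 1) neighbours of B correspond bijectively to the pairs
  (sigma', rho') with sigma' different from sigma(B).

  Split a word of H(q n + d, q) into n such blocks and a tail of length d. The block values sigma
  form a vertex v of H(n, q); an edge inside block i moves v along an edge in direction i and makes
  rho(i) arbitrary. The new word gets colour 1 iff f(v) = 1 and a phase -- the sum mod q of the rho(i)
  over the directions i outside the face of v, of the tail, and in case (1) also of the coordinates
  of v along its face -- is less than t. Counting neighbours coordinate by coordinate: outside the
  face every neighbour of colour 1 of v contributes exactly t neighbours of colour 1, a direction of
  the face contributes q (t - [phase < t]) in case (1) and q (q - 1) [phase < t] in case (2), and a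
  tail coordinate t - [phase < t]. With the tail length d of the theorem these counts add up to a
  (q (b + c) - t c, t c)-colouring.
*)

subsection \<open>Hamming graphs\<close>

lemma list_update_in_ham_vertices:
  assumes "x \<in> ham_vertices n q" "a < q"
  shows "x[p := a] \<in> ham_vertices n q"
proof -
  have "x[p := a] ! i < q" if "i < n" for i
    using assms that by (cases "i = p") (auto simp: ham_vertices_def)
  then show ?thesis using assms by (simp add: ham_vertices_def)
qed

lemma ham_adj_sym: "ham_adj x y \<Longrightarrow> ham_adj y x"
proof -
  assume h: "ham_adj x y"
  then have l: "length x = length y" by (simp add: ham_adj_def)
  have "{i. i < length y \<and> y ! i \<noteq> x ! i} = {i. i < length x \<and> x ! i \<noteq> y ! i}"
    using l by (metis (no_types, lifting))
  then show ?thesis using h l unfolding ham_adj_def by simp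
qed

lemma ham_adj_commute: "ham_adj x y \<longleftrightarrow> ham_adj y x"
  by (rule iffI; erule ham_adj_sym)

lemma ham_adj_if_agree_off:
  assumes "length x = length y" "x \<noteq> y" "\<forall>i<length x. i \<noteq> j \<longrightarrow> x ! i = y ! i"
  shows "ham_adj x y"
proof -
  have "{i. i < length x \<and> x ! i \<noteq> y ! i} \<noteq> {}"
    using assms(1,2) by (auto intro: nth_equalityI)
  with assms(3) have "{i. i < length x \<and> x ! i \<noteq> y ! i} = {j}" by blast
  then show ?thesis using assms(1) by (simp add: ham_adj_def)
qed

lemma ham_nbrs_eq_updates:
  assumes x: "x \<in> ham_vertices n q"
  shows "ham_nbrs n q x = {x[p := a] | p a. p < n \<and> a < q \<and> a \<noteq> x ! p}"
proof (intro equalityI subsetI)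
  have lx: "length x = n" using x by (simp add: ham_vertices_def)
  fix y assume "y \<in> ham_nbrs n q x"
  then have yv: "y \<in> ham_vertices n q" and "ham_adj x y" by (auto simp: ham_nbrs_def)
  then obtain p where D: "{i. i < n \<and> x ! i \<noteq> y ! i} = {p}"
    using lx by (auto simp: ham_adj_def card_1_singleton_iff)
  then have p: "p < n" "x ! p \<noteq> y ! p" by auto
  have "y = x[p := y ! p]"
  proof (rule nth_equalityI)
    fix i assume "i < length y"
    then show "y ! i = x[p := y ! p] ! i"
      using D yv lx by (cases "i = p") (auto simp: ham_vertices_def)
  qed (use yv lx in \<open>simp add: ham_vertices_def\<close>)
  moreover have "y ! p < q" using yv p by (simp add: ham_vertices_def)
  ultimately show "y \<in> {x[p := a] | p a. p < n \<and> a < q \<and> a \<noteq> x ! p}" using p by fastforce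
next
  fix y assume "y \<in> {x[p := a] | p a. p < n \<and> a < q \<and> a \<noteq> x ! p}"
  then obtain p a where y: "y = x[p := a]" "p < n" "a < q" "a \<noteq> x ! p" by blast
  have "length x = n" using x by (simp add: ham_vertices_def)
  moreover have "x \<noteq> y" using y calculation by (metis nth_list_update_eq)
  ultimately have "ham_adj x y"
    using y by (intro ham_adj_if_agree_off[where j = p]) auto
  then show "y \<in> ham_nbrs n q x"
    using list_update_in_ham_vertices[OF x y(3)] y(1) by (simp add: ham_nbrs_def)
qed

lemma card_ham_nbrs_filter:
  assumes x: "x \<in> ham_vertices n q"
  shows "card {y \<in> ham_nbrs n q x. P y}
           = (\<Sum>p<n. card {a. a < q \<and> a \<noteq> x ! p \<and> P (x[p := a])})"
proof -
  have lx: "length x = n" using x by (simp add: ham_vertices_def)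
  let ?S = "Sigma {..<n} (\<lambda>p. {a. a < q \<and> a \<noteq> x ! p \<and> P (x[p := a])})"
  have "inj_on (\<lambda>(p, a). x[p := a]) ?S"
  proof (rule inj_onI, clarify)
    fix p a p' a'
    assume h: "p < n" "a \<noteq> x ! p" "p' < n" "a' \<noteq> x ! p'" and e: "x[p := a] = x[p' := a']"
    then have "p = p'" using lx by (metis nth_list_update_eq nth_list_update_neq)
    then show "p = p' \<and> a = a'" using e h lx by (metis nth_list_update_eq)
  qed
  moreover have "(\<lambda>(p, a). x[p := a]) ` ?S = {y \<in> ham_nbrs n q x. P y}"
    unfolding ham_nbrs_eq_updates[OF x] by auto
  ultimately have "card {y \<in> ham_nbrs n q x. P y} = card ?S" using card_image by fastforce
  also have "\<dots> = (\<Sum>p<n. card {a. a < q \<and> a \<noteq> x ! p \<and> P (x[p := a])})"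
    by (rule card_SigmaI) auto
  finally show ?thesis .
qed

lemma card_less_neq: "a < q \<Longrightarrow> card {b. b < q \<and> b \<noteq> a} = q - 1"
  by (simp add: Collect_conj_eq lessThan_def[symmetric] Diff_eq[symmetric] Collect_neg_eq)

lemma card_ham_nbrs:
  assumes x: "x \<in> ham_vertices n q"
  shows "card (ham_nbrs n q x) = n * (q - 1)"
proof -
  have "card (ham_nbrs n q x) = (\<Sum>p<n. card {a. a < q \<and> a \<noteq> x ! p \<and> True})"
    using card_ham_nbrs_filter[OF x, of "\<lambda>_. True"] by simp
  also have "\<dots> = (\<Sum>p<n. q - 1)"
    using x by (intro sum.cong) (auto simp: ham_vertices_def card_less_neq)
  finally show ?thesis by simp
qed

lemma ham_vertices_Suc:
  "ham_vertices (Suc n) q = (\<lambda>(a, x). a # x) ` ({..<q} \<times> ham_vertices n q)"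
proof (intro equalityI subsetI)
  fix y assume "y \<in> ham_vertices (Suc n) q"
  then obtain a x where "y = a # x" "a < q" "x \<in> ham_vertices n q"
    by (cases y) (fastforce simp: ham_vertices_def)+
  then show "y \<in> (\<lambda>(a, x). a # x) ` ({..<q} \<times> ham_vertices n q)" by blast
next
  fix y assume "y \<in> (\<lambda>(a, x). a # x) ` ({..<q} \<times> ham_vertices n q)"
  then show "y \<in> ham_vertices (Suc n) q"
    by (auto simp: ham_vertices_def nth_Cons split: nat.split)
qed

lemma finite_ham_vertices: "finite (ham_vertices n q)"
  by (induction n) (simp_all add: ham_vertices_Suc ham_vertices_def[of 0])

lemma card_ham_vertices: "card (ham_vertices n q) = q ^ n"
proof (induction n)
  case 0
  have "ham_vertices 0 q = {[]}" by (auto simp: ham_vertices_def)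
  then show ?case by simp
next
  case (Suc n)
  have "inj_on (\<lambda>(a, x). a # x) ({..<q} \<times> ham_vertices n q)" by (auto simp: inj_on_def)
  then show ?case
    by (simp add: ham_vertices_Suc card_image card_cartesian_product Suc.IH)
qed

lemma finite_ham_nbrs: "finite (ham_nbrs n q x)"
  by (rule finite_subset[OF _ finite_ham_vertices[of n q]]) (auto simp: ham_nbrs_def)

lemma card_ham_nbrs_two_colours:
  fixes f :: "nat list \<Rightarrow> nat"
  assumes x: "x \<in> ham_vertices n q" and f: "\<forall>y\<in>ham_vertices n q. f y = 1 \<or> f y = 2"
  shows "card {y \<in> ham_nbrs n q x. f y = 1} + card {y \<in> ham_nbrs n q x. f y = 2} = n * (q - 1)"
proof -
  let ?A = "{y \<in> ham_nbrs n q x. f y = 1}" and ?B = "{y \<in> ham_nbrs n q x. f y = 2}"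
  have "ham_nbrs n q x = ?A \<union> ?B" using f by (auto simp: ham_nbrs_def)
  moreover have "card (?A \<union> ?B) = card ?A + card ?B"
    by (rule card_Un_disjoint) (auto intro: finite_subset[OF _ finite_ham_nbrs])
  ultimately have "card (ham_nbrs n q x) = card ?A + card ?B" by simp
  then show ?thesis using card_ham_nbrs[OF x] by simp
qed

lemma is_coloring_imp_two_le:
  assumes "is_coloring n q b c f"
  shows "2 \<le> q"
proof (rule ccontr)
  assume "\<not> 2 \<le> q"
  then have "q ^ n \<le> 1" by (intro power_le_one) simp_all
  then have "card (ham_vertices n q) \<le> 1" by (simp add: card_ham_vertices)
  then have "card (f ` ham_vertices n q) \<le> 1"
    using card_image_le[OF finite_ham_vertices[of n q], of f] by linarith
  then show False using assms by (simp add: is_coloring_def)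
qed

lemma add_mod_right_inj:
  "(x + z) mod q = (y + z) mod (q::nat) \<Longrightarrow> x < q \<Longrightarrow> y < q \<Longrightarrow> x = y"
  by (metis cong_add_rcancel_nat cong_def mod_less)

lemma add_mod_left_inj:
  "(z + x) mod q = (z + y) mod (q::nat) \<Longrightarrow> x < q \<Longrightarrow> y < q \<Longrightarrow> x = y"
  by (metis add.commute add_mod_right_inj)

lemma bij_betw_shift_mod:
  assumes "0 < (q::nat)"
  shows "bij_betw (\<lambda>r. (X + r) mod q) {..<q} {..<q}"
proof -
  have "inj_on (\<lambda>r. (X + r) mod q) {..<q}"
  proof (rule inj_onI)
    fix r s assume "r \<in> {..<q}" "s \<in> {..<q}" "(X + r) mod q = (X + s) mod q"
    then show "r = s" by (auto intro: add_mod_left_inj)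
  qed
  moreover have "(\<lambda>r. (X + r) mod q) ` {..<q} \<subseteq> {..<q}" using assms by auto
  ultimately show ?thesis by (simp add: bij_betw_def endo_inj_surj)
qed

lemma card_shift_mod:
  assumes "0 < (q::nat)"
  shows "card {r. r < q \<and> P ((X + r) mod q)} = card {y. y < q \<and> P y}"
proof -
  have "bij_betw (\<lambda>r. (X + r) mod q) {r \<in> {..<q}. P ((X + r) mod q)} {y \<in> {..<q}. P y}"
    using bij_betw_shift_mod[OF assms] by (rule bij_betw_Collect) auto
  then show ?thesis by (simp add: bij_betw_same_card)
qed

lemma card_shift_mod_less:
  "0 < q \<Longrightarrow> t \<le> q \<Longrightarrow> card {r. r < q \<and> (X + r) mod q < t} = (t::nat)"
proof -
  assume "0 < q" "t \<le> q"
  moreover have "{y. y < q \<and> y < t} = {..<t}" using \<open>t \<le> q\<close> by auto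
  ultimately show ?thesis using card_shift_mod[of q "\<lambda>y. y < t" X] by simp
qed

lemma card_shift_mod_less_neq:
  assumes "0 < q" "t \<le> q" "a < q"
  shows "card {r. r < q \<and> r \<noteq> a \<and> (X + r) mod q < t}
           + of_bool ((X + a) mod q < t) = (t::nat)"
proof -
  have "{r. r < q \<and> r \<noteq> a \<and> (X + r) mod q < t} = {r. r < q \<and> (X + r) mod q < t} - {a}" by auto
  moreover have "finite {r. r < q \<and> (X + r) mod q < t}" by simp
  ultimately show ?thesis using card_shift_mod_less[OF assms(1,2), of X] assms(3)
    by (cases "(X + a) mod q < t") (simp_all add: card_Diff_singleton)
qed

subsection \<open>Perfect codes\<close>

lemma perfect_code1_ball_unique:
  assumes pc: "perfect_code1 n q C" and x: "x \<in> ham_vertices n q"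
    and cc: "c \<in> C" "c' \<in> C"
    and ball: "c \<in> insert x (ham_nbrs n q x)" "c' \<in> insert x (ham_nbrs n q x)"
  shows "c = c'"
proof -
  have "card (C \<inter> insert x (ham_nbrs n q x)) = 1" using pc x by (simp add: perfect_code1_def)
  then obtain z where "C \<inter> insert x (ham_nbrs n q x) = {z}" by (auto simp: card_1_singleton_iff)
  then show ?thesis using cc ball by (metis IntI singletonD)
qed

text \<open>A 1-perfect code has minimum distance 3: two codewords agreeing outside two positions
  \<open>i1, i2\<close> lie in the ball around the word that agrees with the first one at \<open>i2\<close> and with the
  second one elsewhere.\<close>
lemma perfect_code1_eq_if_agree_off_two:
  assumes pc: "perfect_code1 n q C" and cc: "c \<in> C" "c' \<in> C"
    and agree: "\<forall>i<n. i \<noteq> i1 \<longrightarrow> i \<noteq> i2 \<longrightarrow> c ! i = c' ! i"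
  shows "c = c'"
proof -
  have cv: "c \<in> ham_vertices n q" "c' \<in> ham_vertices n q"
    using pc cc by (auto simp: perfect_code1_def)
  then have lc: "length c = n" "length c' = n" by (auto simp: ham_vertices_def)
  define m where "m = c[i1 := c' ! i1]"
  have mv: "m \<in> ham_vertices n q"
  proof (cases "i1 < n")
    case True
    then show ?thesis
      unfolding m_def using cv by (intro list_update_in_ham_vertices) (auto simp: ham_vertices_def)
  qed (use cv lc in \<open>simp add: m_def list_update_beyond\<close>)
  have lm: "length m = n" using lc by (simp add: m_def)
  have m_c: "\<forall>i<n. i \<noteq> i1 \<longrightarrow> m ! i = c ! i" by (simp add: m_def)
  have m_c': "\<forall>i<n. i \<noteq> i2 \<longrightarrow> m ! i = c' ! i"
  proof (intro allI impI)
    fix i assume "i < n" "i \<noteq> i2"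
    then show "m ! i = c' ! i" using agree lc by (cases "i = i1") (auto simp: m_def)
  qed
  have "c \<in> insert m (ham_nbrs n q m)"
    using cv lm lc m_c ham_adj_if_agree_off[of m c i1] by (auto simp: ham_nbrs_def)
  moreover have "c' \<in> insert m (ham_nbrs n q m)"
    using cv lm lc m_c' ham_adj_if_agree_off[of m c' i2] by (auto simp: ham_nbrs_def)
  ultimately show ?thesis using perfect_code1_ball_unique[OF pc mv cc] by blast
qed

lemma card_perfect_code1:
  assumes pc: "perfect_code1 n q C"
  shows "card C * (1 + n * (q - 1)) = q ^ n"
proof -
  let ?V = "ham_vertices n q" and ?ball = "\<lambda>x. insert x (ham_nbrs n q x)"
  have CV: "C \<subseteq> ?V" using pc by (simp add: perfect_code1_def)
  have finC: "finite C" using finite_subset[OF CV finite_ham_vertices] .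
  have ball_sym: "{x \<in> ?V. c \<in> ?ball x} = ?ball c" if "c \<in> ?V" for c
    using that by (auto simp: ham_nbrs_def ham_adj_commute)
  have card_ball: "card (?ball c) = 1 + n * (q - 1)" if "c \<in> ?V" for c
  proof -
    have "c \<notin> ham_nbrs n q c" by (simp add: ham_nbrs_def ham_adj_def)
    then show ?thesis using card_ham_nbrs[OF that] finite_ham_nbrs by simp
  qed
  have "q ^ n = (\<Sum>x\<in>?V. card {c \<in> C. c \<in> ?ball x})"
  proof -
    have "card {c \<in> C. c \<in> ?ball x} = card (C \<inter> ?ball x)" for x
      by (rule arg_cong[where f = card]) blast
    then have "card {c \<in> C. c \<in> ?ball x} = 1" if "x \<in> ?V" for x
      using pc that by (simp add: perfect_code1_def)
    then show ?thesis by (simp add: card_ham_vertices)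
  qed
  also have "\<dots> = (\<Sum>x\<in>?V. \<Sum>c\<in>C. if c \<in> ?ball x then 1 else 0)"
    using finC by (intro sum.cong refl) (simp flip: sum.inter_filter)
  also have "\<dots> = (\<Sum>c\<in>C. \<Sum>x\<in>?V. if c \<in> ?ball x then 1 else 0)" by (rule sum.swap)
  also have "\<dots> = (\<Sum>c\<in>C. card {x \<in> ?V. c \<in> ?ball x})"
    using finite_ham_vertices by (intro sum.cong refl) (simp flip: sum.inter_filter)
  also have "\<dots> = (\<Sum>c\<in>C. 1 + n * (q - 1))"
    using CV ball_sym card_ball by (intro sum.cong) auto
  finally show ?thesis by simp
qed

lemma card_perfect_code1_Suc:
  assumes pc: "perfect_code1 (Suc q) q C" and q: "1 \<le> q"
  shows "card C = q ^ (q - 1)"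
proof -
  have "card C * (q * q) = q ^ (q - 1) * (q * q)"
    using card_perfect_code1[OF pc] q by (cases q) (simp_all add: algebra_simps)
  then show ?thesis using q by simp
qed

lemma inj_on_take_perfect_code1:
  assumes pc: "perfect_code1 (Suc q) q C"
  shows "inj_on (take (q - 1)) C"
proof (rule inj_onI)
  fix c c' assume cc: "c \<in> C" "c' \<in> C" and e: "take (q - 1) c = take (q - 1) c'"
  have "c ! i = c' ! i" if "i < q - 1" for i
    using that arg_cong[OF e, of "\<lambda>xs. xs ! i"] by simp
  then have "\<forall>i<Suc q. i \<noteq> q - 1 \<longrightarrow> i \<noteq> q \<longrightarrow> c ! i = c' ! i" by auto
  then show "c = c'" using perfect_code1_eq_if_agree_off_two[OF pc cc] by blast
qed

lemma take_perfect_code1: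
  assumes pc: "perfect_code1 (Suc q) q C" and q: "1 \<le> q"
  shows "take (q - 1) ` C = ham_vertices (q - 1) q"
proof (rule card_subset_eq[OF finite_ham_vertices])
  show "take (q - 1) ` C \<subseteq> ham_vertices (q - 1) q"
    using pc by (auto simp: perfect_code1_def ham_vertices_def)
  show "card (take (q - 1) ` C) = card (ham_vertices (q - 1) q)"
    using card_image[OF inj_on_take_perfect_code1[OF pc]] card_perfect_code1_Suc[OF pc q]
    by (simp add: card_ham_vertices)
qed

definition code_completion :: "nat list set \<Rightarrow> nat \<Rightarrow> nat list \<Rightarrow> nat list" where
  "code_completion C q B = (THE c. c \<in> C \<and> take (q - 1) c = take (q - 1) B)"

lemma code_completion:
  assumes pc: "perfect_code1 (Suc q) q C" and q: "1 \<le> q" and B: "B \<in> ham_vertices q q"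
  shows "code_completion C q B \<in> C" "take (q - 1) (code_completion C q B) = take (q - 1) B"
proof -
  have "take (q - 1) B \<in> ham_vertices (q - 1) q" using B by (auto simp: ham_vertices_def)
  then obtain c where c: "c \<in> C" "take (q - 1) c = take (q - 1) B"
    using take_perfect_code1[OF pc q] by (metis imageE)
  have "code_completion C q B = c"
    unfolding code_completion_def
    using c inj_onD[OF inj_on_take_perfect_code1[OF pc]] by (intro the_equality) auto
  then show "code_completion C q B \<in> C" "take (q - 1) (code_completion C q B) = take (q - 1) B"
    using c by auto
qed

lemma code_completion_nth_less:
  assumes pc: "perfect_code1 (Suc q) q C" and q: "1 \<le> q" and B: "B \<in> ham_vertices q q"
  shows "i < q - 1 \<Longrightarrow> code_completion C q B ! i = B ! i"
    and "i < Suc q \<Longrightarrow> code_completion C q B ! i < q"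
proof -
  show "i < q - 1 \<Longrightarrow> code_completion C q B ! i = B ! i"
    using arg_cong[OF code_completion(2)[OF assms], of "\<lambda>xs. xs ! i"] by simp
  show "i < Suc q \<Longrightarrow> code_completion C q B ! i < q"
    using code_completion(1)[OF assms] pc by (auto simp: perfect_code1_def ham_vertices_def)
qed

lemma code_completion_cong:
  "take (q - 1) B = take (q - 1) B' \<Longrightarrow> code_completion C q B = code_completion C q B'"
  unfolding code_completion_def by simp

locale perfect_code_q =
  fixes q :: nat and C :: "nat list set"
  assumes perfect: "perfect_code1 (Suc q) q C" and two_le_q: "2 \<le> q"
begin

lemma one_le_q: "1 \<le> q"
  using two_le_q by simp

definition block_sigma :: "nat list \<Rightarrow> nat" where
  "block_sigma B = (B ! (q - 1) + code_completion C q B ! (q - 1)) mod q"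

definition block_rho :: "nat list \<Rightarrow> nat" where
  "block_rho B = code_completion C q B ! q"

lemma block_sigma_less: "block_sigma B < q"
  using two_le_q by (simp add: block_sigma_def)

lemma block_rho_less: "B \<in> ham_vertices q q \<Longrightarrow> block_rho B < q"
  using code_completion_nth_less(2)[OF perfect one_le_q] by (simp add: block_rho_def)

lemma code_completion_eq_if_agree_off_two:
  assumes B: "B \<in> ham_vertices q q" and B': "B' \<in> ham_vertices q q"
    and agree: "\<forall>i<q - 1. i \<noteq> i1 \<longrightarrow> i \<noteq> i2 \<longrightarrow> B ! i = B' ! i"
    and last1: "q - 1 \<noteq> i1 \<Longrightarrow> q - 1 \<noteq> i2
                  \<Longrightarrow> code_completion C q B ! (q - 1) = code_completion C q B' ! (q - 1)"
    and last2: "q \<noteq> i1 \<Longrightarrow> q \<noteq> i2 \<Longrightarrow> code_completion C q B ! q = code_completion C q B' ! q"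
  shows "code_completion C q B = code_completion C q B'"
proof (rule perfect_code1_eq_if_agree_off_two[OF perfect])
  show "code_completion C q B \<in> C" "code_completion C q B' \<in> C"
    using code_completion(1)[OF perfect one_le_q] B B' by auto
  have "i < q - 1 \<or> i = q - 1 \<or> i = q" if "i < Suc q" for i
    using that by linarith
  then show "\<forall>i<Suc q. i \<noteq> i1 \<longrightarrow> i \<noteq> i2
      \<longrightarrow> code_completion C q B ! i = code_completion C q B' ! i"
    using agree last1 last2 code_completion_nth_less(1)[OF perfect one_le_q] B B' by metis
qed

lemma block_update_last:
  assumes B: "B \<in> ham_vertices q q"
  shows "code_completion C q (B[q - 1 := a]) = code_completion C q B"
    and "block_sigma (B[q - 1 := a]) = (a + code_completion C q B ! (q - 1)) mod q"
proof -
  show cc: "code_completion C q (B[q - 1 := a]) = code_completion C q B"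
    by (rule code_completion_cong) simp
  have "B[q - 1 := a] ! (q - 1) = a" using B two_le_q by (simp add: ham_vertices_def)
  then show "block_sigma (B[q - 1 := a]) = (a + code_completion C q B ! (q - 1)) mod q"
    unfolding block_sigma_def cc by simp
qed

text \<open>If \<open>j < q - 1\<close>, the completions of \<open>B\<close> and \<open>B[j := a]\<close> differ at \<open>j\<close>, so by minimum
  distance 3 they also differ at both positions \<open>q - 1\<close> and \<open>q\<close>; changing \<open>B ! (q - 1)\<close> leaves
  the completion unchanged. This is why \<open>block_sigma\<close> always changes along an edge.\<close>
lemma block_sigma_update_neq:
  assumes B: "B \<in> ham_vertices q q" and j: "j < q" and a: "a < q" "a \<noteq> B ! j"
  shows "block_sigma (B[j := a]) \<noteq> block_sigma B"
proof
  assume eq: "block_sigma (B[j := a]) = block_sigma B"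
  have B': "B[j := a] \<in> ham_vertices q q" using list_update_in_ham_vertices[OF B a(1)] .
  have lB: "length B = q" using B by (simp add: ham_vertices_def)
  show False
  proof (cases "j = q - 1")
    case True
    have "B ! (q - 1) < q" using B two_le_q by (simp add: ham_vertices_def)
    then have "a = B ! (q - 1)"
      using eq block_update_last[OF B, of a] True a(1)
      by (auto simp: block_sigma_def intro: add_mod_right_inj)
    then show False using a True by simp
  next
    case False
    then have jl: "j < q - 1" using j by linarith
    have "code_completion C q (B[j := a]) ! (q - 1) = code_completion C q B ! (q - 1)"
      using eq False code_completion_nth_less(2)[OF perfect one_le_q] B B'
      by (auto simp: block_sigma_def intro: add_mod_left_inj)
    then have "code_completion C q (B[j := a]) = code_completion C q B"
      by (intro code_completion_eq_if_agree_off_two[OF B' B, of j q]) auto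
    then have "B[j := a] ! j = B ! j"
      using code_completion_nth_less(1)[OF perfect one_le_q _ jl] B B' by metis
    then show False using a lB j by simp
  qed
qed

lemma block_update_inj:
  assumes B: "B \<in> ham_vertices q q" and j: "j < q" "j' < q" and a: "a < q" "a' < q"
    and na: "a \<noteq> B ! j" "a' \<noteq> B ! j'"
    and sigma: "block_sigma (B[j := a]) = block_sigma (B[j' := a'])"
    and rho: "block_rho (B[j := a]) = block_rho (B[j' := a'])"
  shows "j = j' \<and> a = a'"
proof -
  have B1: "B[j := a] \<in> ham_vertices q q" using list_update_in_ham_vertices[OF B a(1)] .
  have B2: "B[j' := a'] \<in> ham_vertices q q" using list_update_in_ham_vertices[OF B a(2)] .
  have lB: "length B = q" using B by (simp add: ham_vertices_def)
  have last: "code_completion C q (B[j := a]) ! q = code_completion C q (B[j' := a']) ! q"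
    using rho by (simp add: block_rho_def)
  note nth_less = code_completion_nth_less[OF perfect one_le_q]
  consider "j = q - 1" "j' = q - 1" | "j < q - 1" "j' = q - 1" | "j = q - 1" "j' < q - 1"
    | "j < q - 1" "j' < q - 1" using j by linarith
  then show ?thesis
  proof cases
    case 1
    then show ?thesis
      using sigma block_update_last[OF B] a by (auto intro: add_mod_right_inj)
  next
    case 2
    have "code_completion C q (B[j := a]) = code_completion C q B"
      using last block_update_last(1)[OF B] 2
      by (intro code_completion_eq_if_agree_off_two[OF B1 B, of j "q - 1"]) auto
    then have "B[j := a] ! j = B ! j" using nth_less(1)[OF _ 2(1)] B B1 by metis
    then show ?thesis using na lB j by simp
  next
    case 3
    have "code_completion C q (B[j' := a']) = code_completion C q B"
      using last block_update_last(1)[OF B] 3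
      by (intro code_completion_eq_if_agree_off_two[OF B2 B, of j' "q - 1"]) auto
    then have "B[j' := a'] ! j' = B ! j'" using nth_less(1)[OF _ 3(2)] B B2 by metis
    then show ?thesis using na lB j by simp
  next
    case 4
    have "code_completion C q (B[j := a]) ! (q - 1) = code_completion C q (B[j' := a']) ! (q - 1)"
      using sigma 4 nth_less(2) B1 B2 by (auto simp: block_sigma_def intro: add_mod_left_inj)
    then have "code_completion C q (B[j := a]) = code_completion C q (B[j' := a'])"
      using last by (intro code_completion_eq_if_agree_off_two[OF B1 B2, of j j']) auto
    then have "B[j := a] ! j = B[j' := a'] ! j" using nth_less(1)[OF _ 4(1)] B1 B2 by metis
    then show ?thesis using na lB j by (cases "j = j'") auto
  qed
qed

lemma bij_betw_block_nbrs:
  assumes B: "B \<in> ham_vertices q q"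
  shows "bij_betw (\<lambda>(j, a). (block_sigma (B[j := a]), block_rho (B[j := a])))
           (SIGMA j:{..<q}. {a. a < q \<and> a \<noteq> B ! j}) (({..<q} - {block_sigma B}) \<times> {..<q})"
proof -
  let ?f = "\<lambda>(j, a). (block_sigma (B[j := a]), block_rho (B[j := a]))"
  let ?S = "SIGMA j:{..<q}. {a. a < q \<and> a \<noteq> B ! j}"
  let ?T = "({..<q} - {block_sigma B}) \<times> {..<q}"
  have inj: "inj_on ?f ?S"
    using block_update_inj[OF B] by (intro inj_onI) auto
  have "?f ` ?S \<subseteq> ?T"
    using block_sigma_update_neq[OF B] block_rho_less list_update_in_ham_vertices[OF B]
      block_sigma_less by auto
  moreover have "card ?S = card ?T"
  proof -
    have "card ?S = (\<Sum>j<q. card {a. a < q \<and> a \<noteq> B ! j})" by (rule card_SigmaI) auto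
    also have "\<dots> = q * (q - 1)"
      using B by (simp add: ham_vertices_def card_less_neq)
    finally show ?thesis using block_sigma_less[of B] by (simp add: card_cartesian_product)
  qed
  ultimately have "?f ` ?S = ?T"
    by (intro card_subset_eq) (simp_all add: card_image[OF inj])
  then show ?thesis using inj by (simp add: bij_betw_def)
qed

lemma card_block_nbrs_filter:
  assumes B: "B \<in> ham_vertices q q"
  shows "(\<Sum>j<q. card {a. a < q \<and> a \<noteq> B ! j \<and> R (block_sigma (B[j := a])) (block_rho (B[j := a]))})
         = card {(w, r). w < q \<and> r < q \<and> w \<noteq> block_sigma B \<and> R w r}"
proof -
  let ?f = "\<lambda>(j, a). (block_sigma (B[j := a]), block_rho (B[j := a]))"
  let ?S = "SIGMA j:{..<q}. {a. a < q \<and> a \<noteq> B ! j}"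
  let ?S' = "SIGMA j:{..<q}. {a. a < q \<and> a \<noteq> B ! j \<and> R (block_sigma (B[j := a])) (block_rho (B[j := a]))}"
  have bij: "bij_betw ?f ?S (({..<q} - {block_sigma B}) \<times> {..<q})"
    by (rule bij_betw_block_nbrs[OF B])
  have "?S' = {u \<in> ?S. case_prod R (?f u)}" by auto
  then have "bij_betw ?f ?S' {v \<in> ({..<q} - {block_sigma B}) \<times> {..<q}. case_prod R v}"
    using bij_betw_Collect[OF bij, of "case_prod R"] by simp
  moreover have "{v \<in> ({..<q} - {block_sigma B}) \<times> {..<q}. case_prod R v}
      = {(w, r). w < q \<and> r < q \<and> w \<noteq> block_sigma B \<and> R w r}" by auto
  ultimately have "card ?S' = card {(w, r). w < q \<and> r < q \<and> w \<noteq> block_sigma B \<and> R w r}"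
    by (simp add: bij_betw_same_card)
  moreover have "card ?S' = (\<Sum>j<q. card {a. a < q \<and> a \<noteq> B ! j
      \<and> R (block_sigma (B[j := a])) (block_rho (B[j := a]))})"
    by (rule card_SigmaI) auto
  ultimately show ?thesis by simp
qed

lemma block_sigma_rho_surj:
  assumes w: "w < q" and r: "r < q"
  obtains B where "B \<in> ham_vertices q q" "block_sigma B = w" "block_rho B = r"
proof -
  let ?B0 = "replicate q 0" and ?B1 = "(replicate q 0)[0 := 1]"
  have B0: "?B0 \<in> ham_vertices q q" using two_le_q by (simp add: ham_vertices_def)
  have B1: "?B1 \<in> ham_vertices q q" using list_update_in_ham_vertices[OF B0] two_le_q by simp
  have "block_sigma ?B1 \<noteq> block_sigma ?B0"
    using block_sigma_update_neq[OF B0] two_le_q by simp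
  then obtain B where B: "B \<in> ham_vertices q q" "block_sigma B \<noteq> w"
    using B0 B1 by metis
  then have "(w, r) \<in> (\<lambda>(j, a). (block_sigma (B[j := a]), block_rho (B[j := a])))
      ` (SIGMA j:{..<q}. {a. a < q \<and> a \<noteq> B ! j})"
    using bij_betw_imp_surj_on[OF bij_betw_block_nbrs[OF B(1)]] w r by simp
  then obtain j a where ja: "j < q" "a < q"
    "(w, r) = (block_sigma (B[j := a]), block_rho (B[j := a]))" by (auto simp: image_iff)
  show ?thesis
    using that[OF list_update_in_ham_vertices[OF B(1) ja(2)]] ja(3) by simp
qed

end

subsection \<open>Splitting words into blocks\<close>

lemma sum_lessThan_add: "(\<Sum>p<m + d. g p) = (\<Sum>p<m. g p) + (\<Sum>j<d. g (m + j :: nat))"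
  by (induction d) (simp_all add: add.assoc)

lemma sum_lessThan_mult: "(\<Sum>p<n * q. g p) = (\<Sum>i<n. \<Sum>j<q. g (i * q + j :: nat))"
  by (induction n) (simp_all add: add.commute[of q] sum_lessThan_add)

lemma block_index_less:
  assumes "i < n" "j < q"
  shows "i * q + j < n * (q::nat)"
proof -
  have "i * q + j < Suc i * q" using assms(2) by simp
  also have "\<dots> \<le> n * q" using assms(1) by (intro mult_le_mono1) simp
  finally show ?thesis .
qed

definition block :: "nat \<Rightarrow> nat \<Rightarrow> nat list \<Rightarrow> nat list" where
  "block q i x = map (\<lambda>j. x ! (i * q + j)) [0..<q]"

lemma length_block [simp]: "length (block q i x) = q"
  by (simp add: block_def)

lemma nth_block [simp]: "j < q \<Longrightarrow> block q i x ! j = x ! (i * q + j)"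
  by (simp add: block_def)

lemma block_update_same:
  "j < q \<Longrightarrow> i * q + j < length x \<Longrightarrow> block q i (x[i * q + j := a]) = (block q i x)[j := a]"
  by (intro nth_equalityI) (auto simp: nth_list_update)

lemma block_update_other:
  assumes "j < q" "l \<noteq> i"
  shows "block q l (x[i * q + j := a]) = block q l x"
proof (intro nth_equalityI)
  fix j' assume "j' < length (block q l (x[i * q + j := a]))"
  then have "j' < q" by simp
  have "(l * q + j') div q \<noteq> (i * q + j) div q" using \<open>j' < q\<close> assms by simp
  then have "l * q + j' \<noteq> i * q + j" by metis
  then show "block q l (x[i * q + j := a]) ! j' = block q l x ! j'" using \<open>j' < q\<close> by simp
qed simp

lemma block_update_beyond:
  assumes "l < n" "n * q \<le> p"
  shows "block q l (x[p := a]) = block q l x"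
proof (intro nth_equalityI)
  fix j assume "j < length (block q l (x[p := a]))"
  then have "l * q + j < p" using block_index_less[OF assms(1)] assms(2) by fastforce
  then show "block q l (x[p := a]) ! j = block q l x ! j" using \<open>j < _\<close> by simp
qed simp

lemma block_in_ham_vertices:
  assumes x: "x \<in> ham_vertices N q" and "i < n" "n * q \<le> N"
  shows "block q i x \<in> ham_vertices q q"
proof -
  have "x ! (i * q + j) < q" if "j < q" for j
    using x block_index_less[OF \<open>i < n\<close> that] \<open>n * q \<le> N\<close> by (simp add: ham_vertices_def)
  then show ?thesis by (simp add: ham_vertices_def)
qed

lemma exists_word_blocks_tail:
  assumes Bs: "\<And>i. i < n \<Longrightarrow> Bs i \<in> ham_vertices q q" and Z: "Z \<in> ham_vertices d q"
  obtains x where "x \<in> ham_vertices (q * n + d) q" "\<And>i. i < n \<Longrightarrow> block q i x = Bs i"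
    "drop (q * n) x = Z"
proof -
  define x where
    "x = map (\<lambda>p. if p < q * n then Bs (p div q) ! (p mod q) else Z ! (p - q * n)) [0..<q * n + d]"
  have "block q i x = Bs i" if i: "i < n" for i
  proof (intro nth_equalityI)
    fix j assume "j < length (block q i x)"
    then have j: "j < q" by simp
    then have "i * q + j < q * n" using block_index_less[OF i j] by (simp add: mult.commute)
    then show "block q i x ! j = Bs i ! j" using j by (simp add: x_def)
  qed (use Bs[OF i] in \<open>simp add: ham_vertices_def\<close>)
  moreover have "x ! p < q" if p: "p < q * n + d" for p
  proof (cases "p < q * n")
    case True
    then have "0 < q" by (cases q) simp_all
    with True have "p div q < n" "p mod q < q"
      by (simp_all add: less_mult_imp_div_less mult.commute)
    then show ?thesis using True p Bs[of "p div q"] by (simp add: x_def ham_vertices_def)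
  next
    case False
    then show ?thesis using p Z by (simp add: x_def ham_vertices_def)
  qed
  then have "x \<in> ham_vertices (q * n + d) q" by (simp add: ham_vertices_def x_def)
  moreover have "drop (q * n) x = Z"
    using Z by (intro nth_equalityI) (simp_all add: x_def ham_vertices_def)
  ultimately show ?thesis using that by blast
qed

context perfect_code_q
begin

definition sigma_vec :: "nat \<Rightarrow> nat list \<Rightarrow> nat list" where
  "sigma_vec n x = map (\<lambda>i. block_sigma (block q i x)) [0..<n]"

definition rho_vec :: "nat \<Rightarrow> nat list \<Rightarrow> nat list" where
  "rho_vec n x = map (\<lambda>i. block_rho (block q i x)) [0..<n]"

lemma length_sigma_vec [simp]: "length (sigma_vec n x) = n"
  and length_rho_vec [simp]: "length (rho_vec n x) = n"
  and nth_sigma_vec [simp]: "i < n \<Longrightarrow> sigma_vec n x ! i = block_sigma (block q i x)"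
  and nth_rho_vec [simp]: "i < n \<Longrightarrow> rho_vec n x ! i = block_rho (block q i x)"
  by (simp_all add: sigma_vec_def rho_vec_def)

lemma sigma_vec_in_ham_vertices: "sigma_vec n x \<in> ham_vertices n q"
  using block_sigma_less by (simp add: ham_vertices_def)

lemma sigma_rho_vec_update_block:
  assumes "i < n" "j < q" "i * q + j < length x"
  shows "sigma_vec n (x[i * q + j := a]) = (sigma_vec n x)[i := block_sigma ((block q i x)[j := a])]"
    and "rho_vec n (x[i * q + j := a]) = (rho_vec n x)[i := block_rho ((block q i x)[j := a])]"
  using assms block_update_same[OF assms(2,3)] block_update_other[OF assms(2)]
  by (auto intro!: nth_equalityI simp: nth_list_update)

lemma sigma_rho_vec_update_beyond:
  assumes "n * q \<le> p"
  shows "sigma_vec n (x[p := a]) = sigma_vec n x" "rho_vec n (x[p := a]) = rho_vec n x"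
  using assms by (auto simp: sigma_vec_def rho_vec_def block_update_beyond)

text \<open>Changing a coordinate inside block \<open>i\<close> moves \<open>sigma_vec\<close> at \<open>i\<close> to any \<open>w\<close> other than its
  current value and \<open>rho_vec\<close> at \<open>i\<close> to any \<open>r\<close>, each pair \<open>(w, r)\<close> arising exactly once;
  changing a tail coordinate changes only the tail.\<close>
lemma card_ham_nbrs_lift:
  assumes x: "x \<in> ham_vertices (q * n + d) q"
  shows "card {y \<in> ham_nbrs (q * n + d) q x. \<Phi> (sigma_vec n y) (rho_vec n y) (drop (q * n) y)} =
   (\<Sum>i<n. card {(w, r). w < q \<and> r < q \<and> w \<noteq> sigma_vec n x ! i
        \<and> \<Phi> ((sigma_vec n x)[i := w]) ((rho_vec n x)[i := r]) (drop (q * n) x)})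
   + (\<Sum>j<d. card {z. z < q \<and> z \<noteq> drop (q * n) x ! j
        \<and> \<Phi> (sigma_vec n x) (rho_vec n x) ((drop (q * n) x)[j := z])})"
proof -
  define F where "F p = card {a. a < q \<and> a \<noteq> x ! p
    \<and> \<Phi> (sigma_vec n (x[p := a])) (rho_vec n (x[p := a])) (drop (q * n) (x[p := a]))}" for p
  have lx: "length x = q * n + d" using x by (simp add: ham_vertices_def)
  have split: "card {y \<in> ham_nbrs (q * n + d) q x. \<Phi> (sigma_vec n y) (rho_vec n y) (drop (q * n) y)}
      = (\<Sum>i<n. \<Sum>j<q. F (i * q + j)) + (\<Sum>j<d. F (q * n + j))"
    unfolding card_ham_nbrs_filter[OF x] F_def[symmetric] sum_lessThan_add
    by (simp add: mult.commute[of q] sum_lessThan_mult)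
  have blocks: "(\<Sum>j<q. F (i * q + j)) = card {(w, r). w < q \<and> r < q \<and> w \<noteq> sigma_vec n x ! i
        \<and> \<Phi> ((sigma_vec n x)[i := w]) ((rho_vec n x)[i := r]) (drop (q * n) x)}" if i: "i < n" for i
  proof -
    have B: "block q i x \<in> ham_vertices q q"
      using block_in_ham_vertices[OF x i] by (simp add: mult.commute)
    have "F (i * q + j) = card {a. a < q \<and> a \<noteq> block q i x ! j
        \<and> \<Phi> ((sigma_vec n x)[i := block_sigma ((block q i x)[j := a])])
             ((rho_vec n x)[i := block_rho ((block q i x)[j := a])]) (drop (q * n) x)}"
      if j: "j < q" for j
    proof -
      have "i * q + j < q * n" using block_index_less[OF i j] by (simp add: mult.commute)
      then show ?thesis
        unfolding F_def using sigma_rho_vec_update_block[OF i j] lx j by simp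
    qed
    then show ?thesis
      using card_block_nbrs_filter[OF B, of "\<lambda>w r. \<Phi> ((sigma_vec n x)[i := w])
        ((rho_vec n x)[i := r]) (drop (q * n) x)"] i by simp
  qed
  have tail: "F (q * n + j) = card {z. z < q \<and> z \<noteq> drop (q * n) x ! j
        \<and> \<Phi> (sigma_vec n x) (rho_vec n x) ((drop (q * n) x)[j := z])}" if "j < d" for j
    using that lx sigma_rho_vec_update_beyond[of n "q * n + j"]
    by (simp add: F_def drop_update_swap mult.commute)
  show ?thesis unfolding split using blocks tail by simp
qed

lemma exists_word_sigma_rho_tail:
  assumes v: "v \<in> ham_vertices n q" and \<rho>: "\<rho> \<in> ham_vertices n q" and Z: "Z \<in> ham_vertices d q"
  obtains x where "x \<in> ham_vertices (q * n + d) q" "sigma_vec n x = v" "rho_vec n x = \<rho>"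
    "drop (q * n) x = Z"
proof -
  have "\<forall>i. \<exists>B. i < n \<longrightarrow> B \<in> ham_vertices q q \<and> block_sigma B = v ! i \<and> block_rho B = \<rho> ! i"
  proof (intro allI)
    fix i
    show "\<exists>B. i < n \<longrightarrow> B \<in> ham_vertices q q \<and> block_sigma B = v ! i \<and> block_rho B = \<rho> ! i"
    proof (cases "i < n")
      case True
      then have "v ! i < q" "\<rho> ! i < q" using v \<rho> by (simp_all add: ham_vertices_def)
      then show ?thesis by (rule block_sigma_rho_surj) blast
    qed simp
  qed
  then obtain Bs where Bs: "\<forall>i. i < n \<longrightarrow>
      Bs i \<in> ham_vertices q q \<and> block_sigma (Bs i) = v ! i \<and> block_rho (Bs i) = \<rho> ! i"
    by (rule choice[THEN exE])
  then obtain x where x: "x \<in> ham_vertices (q * n + d) q" "\<And>i. i < n \<Longrightarrow> block q i x = Bs i"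
    "drop (q * n) x = Z"
    using exists_word_blocks_tail[OF _ Z, of n Bs] by blast
  moreover have "sigma_vec n x = v" "rho_vec n x = \<rho>"
    using v \<rho> Bs x(2) by (auto intro!: nth_equalityI simp: ham_vertices_def)
  ultimately show ?thesis using that by blast
qed

end

subsection \<open>Colourings whose colour-1 vertices are partitioned into faces\<close>

lemma sum_nth_update_mem:
  fixes xs :: "nat list"
  assumes "finite A" "j \<in> A" "j < length xs"
  shows "(\<Sum>l\<in>A. xs[j := z] ! l) = (\<Sum>l\<in>A - {j}. xs ! l) + z"
proof -
  have "(\<Sum>l\<in>A. xs[j := z] ! l) = xs[j := z] ! j + (\<Sum>l\<in>A - {j}. xs[j := z] ! l)"
    using sum.remove[OF assms(1,2)] .
  also have "(\<Sum>l\<in>A - {j}. xs[j := z] ! l) = (\<Sum>l\<in>A - {j}. xs ! l)" by (intro sum.cong) auto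
  finally show ?thesis using assms(3) by simp
qed

lemma sum_nth_update_nonmem:
  "j \<notin> A \<Longrightarrow> (\<Sum>l\<in>A. xs[j := z] ! l) = (\<Sum>l\<in>A. xs ! l)"
  by (intro sum.cong refl nth_list_update_neq) blast

locale face_partitioned_coloring =
  fixes n q k b c :: nat and f :: "nat list \<Rightarrow> nat" and P :: "nat list set set"
  assumes coloring: "is_coloring n q b c f"
    and faces: "\<forall>F\<in>P. is_face n q k F"
    and disjoint: "\<forall>F\<in>P. \<forall>G\<in>P. F \<noteq> G \<longrightarrow> F \<inter> G = {}"
    and union: "\<Union>P = {x \<in> ham_vertices n q. f x = 1}"
begin

abbreviation S :: "nat list set" where
  "S \<equiv> {x \<in> ham_vertices n q. f x = 1}"

lemma colour_cases: "v \<in> ham_vertices n q \<Longrightarrow> f v = 1 \<or> f v = 2"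
  using coloring unfolding is_coloring_def by blast

definition face_of :: "nat list \<Rightarrow> nat list set" where
  "face_of v = (THE F. F \<in> P \<and> v \<in> F)"

definition face_dirs :: "nat list set \<Rightarrow> nat set" where
  "face_dirs F = (SOME K. \<exists>x. K \<subseteq> {..<n} \<and> card K = k \<and> x \<in> ham_vertices n q \<and>
      F = {y \<in> ham_vertices n q. \<forall>i<n. i \<notin> K \<longrightarrow> y ! i = x ! i})"

abbreviation dirs_at :: "nat list \<Rightarrow> nat set" where
  "dirs_at v \<equiv> face_dirs (face_of v)"

lemma face_of_eq:
  assumes "F \<in> P" "v \<in> F"
  shows "face_of v = F"
  unfolding face_of_def using assms disjoint by (intro the_equality) blast+

lemma face_of_mem:
  assumes "v \<in> S"
  shows "face_of v \<in> P" "v \<in> face_of v"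
proof -
  obtain F where "F \<in> P" "v \<in> F" using assms union by blast
  then show "face_of v \<in> P" "v \<in> face_of v" using face_of_eq by auto
qed

lemma face_dirs:
  assumes "F \<in> P"
  shows "face_dirs F \<subseteq> {..<n}" "card (face_dirs F) = k"
    "\<exists>x. F = {y \<in> ham_vertices n q. \<forall>i<n. i \<notin> face_dirs F \<longrightarrow> y ! i = x ! i}"
proof -
  have "\<exists>K x. K \<subseteq> {..<n} \<and> card K = k \<and> x \<in> ham_vertices n q \<and>
      F = {y \<in> ham_vertices n q. \<forall>i<n. i \<notin> K \<longrightarrow> y ! i = x ! i}"
    using faces assms by (simp add: is_face_def)
  then have "\<exists>x. face_dirs F \<subseteq> {..<n} \<and> card (face_dirs F) = k \<and> x \<in> ham_vertices n q \<and>
      F = {y \<in> ham_vertices n q. \<forall>i<n. i \<notin> face_dirs F \<longrightarrow> y ! i = x ! i}"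
    unfolding face_dirs_def by (rule someI_ex)
  then show "face_dirs F \<subseteq> {..<n}" "card (face_dirs F) = k"
    "\<exists>x. F = {y \<in> ham_vertices n q. \<forall>i<n. i \<notin> face_dirs F \<longrightarrow> y ! i = x ! i}"
    by blast+
qed

lemma update_mem_face:
  assumes F: "F \<in> P" and v: "v \<in> F" and i: "i \<in> face_dirs F" and w: "w < q"
  shows "v[i := w] \<in> F"
proof -
  obtain x where x: "F = {y \<in> ham_vertices n q. \<forall>i<n. i \<notin> face_dirs F \<longrightarrow> y ! i = x ! i}"
    using face_dirs(3)[OF F] by blast
  then have vx: "v \<in> ham_vertices n q" "\<forall>l<n. l \<notin> face_dirs F \<longrightarrow> v ! l = x ! l" using v by auto
  have "\<forall>l<n. l \<notin> face_dirs F \<longrightarrow> v[i := w] ! l = x ! l"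
  proof (intro allI impI)
    fix l assume "l < n" "l \<notin> face_dirs F"
    moreover from this have "l \<noteq> i" using i by blast
    ultimately show "v[i := w] ! l = x ! l" using vx by simp
  qed
  then have "v[i := w] \<in> {y \<in> ham_vertices n q. \<forall>l<n. l \<notin> face_dirs F \<longrightarrow> y ! l = x ! l}"
    using list_update_in_ham_vertices[OF vx(1) w] by simp
  then show ?thesis using x by simp
qed

lemma update_mem_S:
  "v \<in> S \<Longrightarrow> i \<in> dirs_at v \<Longrightarrow> w < q \<Longrightarrow> v[i := w] \<in> S \<and> face_of (v[i := w]) = face_of v"
  using update_mem_face[OF face_of_mem] face_of_eq face_of_mem(1) union by blast

lemma face_of_update_dir:
  assumes v: "v \<in> ham_vertices n q" and v': "v[i := w] \<in> S" and i: "i \<in> dirs_at (v[i := w])"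
  shows "v \<in> S" "face_of v = face_of (v[i := w])"
proof -
  have F: "face_of (v[i := w]) \<in> P" "v[i := w] \<in> face_of (v[i := w])"
    using face_of_mem[OF v'] by auto
  have "i < length v" "v ! i < q"
    using v face_dirs(1)[OF F(1)] i by (auto simp: ham_vertices_def)
  then have "v \<in> face_of (v[i := w])" using update_mem_face[OF F i, of "v ! i"] by simp
  then show "v \<in> S" "face_of v = face_of (v[i := w])"
    using F(1) union face_of_eq by blast+
qed

definition nbrs_in_S :: "nat list \<Rightarrow> nat \<Rightarrow> nat" where
  "nbrs_in_S v i = card {w. w < q \<and> w \<noteq> v ! i \<and> v[i := w] \<in> S}"

lemma sum_nbrs_in_S:
  assumes v: "v \<in> ham_vertices n q"
  shows "(\<Sum>i<n. nbrs_in_S v i) = card {y \<in> ham_nbrs n q v. f y = 1}"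
proof -
  have "{y \<in> ham_nbrs n q v. f y = 1} = {y \<in> ham_nbrs n q v. y \<in> S}"
    by (auto simp: ham_nbrs_def)
  then show ?thesis using card_ham_nbrs_filter[OF v, of "\<lambda>y. y \<in> S"] by (simp add: nbrs_in_S_def)
qed

lemma sum_nbrs_in_S_of_mem:
  assumes "v \<in> S"
  shows "(\<Sum>i<n. nbrs_in_S v i) + b = n * (q - 1)"
  using assms coloring card_ham_nbrs_two_colours[of v n q f] colour_cases sum_nbrs_in_S
  by (simp add: is_coloring_def)

lemma sum_nbrs_in_S_of_nonmem:
  assumes v: "v \<in> ham_vertices n q" and "v \<notin> S"
  shows "(\<Sum>i<n. nbrs_in_S v i) = c"
proof -
  have "f v = 2" using colour_cases[OF v] assms by auto
  then show ?thesis using coloring v sum_nbrs_in_S[OF v] by (simp add: is_coloring_def)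
qed

lemma nbrs_in_S_dir:
  assumes vS: "v \<in> S" and i: "i \<in> dirs_at v"
  shows "nbrs_in_S v i = q - 1"
proof -
  have "v ! i < q"
    using vS face_dirs(1)[OF face_of_mem(1)[OF vS]] i by (auto simp: ham_vertices_def)
  moreover have "{w. w < q \<and> w \<noteq> v ! i \<and> v[i := w] \<in> S} = {w. w < q \<and> w \<noteq> v ! i}"
    using update_mem_S[OF vS i] by blast
  ultimately show ?thesis by (simp add: nbrs_in_S_def card_less_neq)
qed

lemma exists_free_dir:
  assumes vS: "v \<in> S"
  obtains l where "l < n" "l \<notin> dirs_at v"
proof -
  have "2 \<in> f ` ham_vertices n q" using coloring by (simp add: is_coloring_def)
  then obtain v0 where v0: "v0 \<in> ham_vertices n q" "f v0 = 2" by (metis imageE)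
  obtain x where x: "face_of v = {y \<in> ham_vertices n q. \<forall>i<n. i \<notin> dirs_at v \<longrightarrow> y ! i = x ! i}"
    using face_dirs(3)[OF face_of_mem(1)[OF vS]] by blast
  have "\<not> (\<forall>l<n. l \<in> dirs_at v)"
  proof
    assume "\<forall>l<n. l \<in> dirs_at v"
    then have "v0 \<in> face_of v" using v0(1) x by simp
    then have "v0 \<in> S" using face_of_mem(1)[OF vS] union by blast
    then show False using v0(2) by simp
  qed
  then show ?thesis using that by blast
qed

text \<open>The flag \<open>e\<close> selects case (1) of the theorem, in which the coordinates of \<open>v\<close> along its face
  also enter the phase.\<close>
definition phase :: "bool \<Rightarrow> nat list \<Rightarrow> nat list \<Rightarrow> nat list \<Rightarrow> nat" where
  "phase e v \<rho> Z = ((\<Sum>l\<in>{..<n} - dirs_at v. \<rho> ! l) + (if e then \<Sum>l\<in>dirs_at v. v ! l else 0)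
                     + (\<Sum>j<length Z. Z ! j)) mod q"

definition lifted_colour :: "bool \<Rightarrow> nat \<Rightarrow> nat list \<Rightarrow> nat list \<Rightarrow> nat list \<Rightarrow> nat" where
  "lifted_colour e t v \<rho> Z = (if v \<in> S \<and> phase e v \<rho> Z < t then 1 else 2)"

lemma lifted_colour_eq_1: "lifted_colour e t v \<rho> Z = 1 \<longleftrightarrow> v \<in> S \<and> phase e v \<rho> Z < t"
  by (simp add: lifted_colour_def)

definition lifted_count1 :: "bool \<Rightarrow> nat \<Rightarrow> nat list \<Rightarrow> nat list \<Rightarrow> nat list \<Rightarrow> nat" where
  "lifted_count1 e t v \<rho> Z =
     (\<Sum>i<n. card {(w, r). w < q \<and> r < q \<and> w \<noteq> v ! i
                           \<and> lifted_colour e t (v[i := w]) (\<rho>[i := r]) Z = 1})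
     + (\<Sum>j<length Z. card {z. z < q \<and> z \<noteq> Z ! j \<and> lifted_colour e t v \<rho> (Z[j := z]) = 1})"

lemma finite_dirs_at: "v \<in> S \<Longrightarrow> finite (dirs_at v)"
  using face_dirs(1)[OF face_of_mem(1)] finite_subset by blast

text \<open>Along a coordinate that is not a free direction of the face of the new word, \<open>rho\<close> enters the
  phase linearly, so each colour-1 choice of \<open>w\<close> is completed by exactly \<open>t\<close> values of \<open>r\<close>.\<close>
lemma card_free_coord:
  assumes v: "v \<in> ham_vertices n q" and \<rho>: "length \<rho> = n" and i: "i < n"
    and free: "\<And>w. w < q \<Longrightarrow> v[i := w] \<in> S \<Longrightarrow> i \<notin> dirs_at (v[i := w])"
    and q: "0 < q" and t: "t \<le> q"
  shows "card {(w, r). w < q \<and> r < q \<and> w \<noteq> v ! i \<and> lifted_colour e t (v[i := w]) (\<rho>[i := r]) Z = 1}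
         = t * nbrs_in_S v i"
proof -
  let ?W = "{w. w < q \<and> w \<noteq> v ! i \<and> v[i := w] \<in> S}"
  define X where "X w = (\<Sum>l\<in>{..<n} - dirs_at (v[i := w]) - {i}. \<rho> ! l)
    + (if e then \<Sum>l\<in>dirs_at (v[i := w]). v[i := w] ! l else 0) + (\<Sum>j<length Z. Z ! j)" for w
  have "phase e (v[i := w]) (\<rho>[i := r]) Z = (X w + r) mod q" if "w \<in> ?W" for w r
  proof -
    have "(\<Sum>l\<in>{..<n} - dirs_at (v[i := w]). \<rho>[i := r] ! l)
        = (\<Sum>l\<in>{..<n} - dirs_at (v[i := w]) - {i}. \<rho> ! l) + r"
      using free that i \<rho> by (intro sum_nth_update_mem) auto
    then show ?thesis by (simp add: phase_def X_def algebra_simps)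
  qed
  then have "{(w, r). w < q \<and> r < q \<and> w \<noteq> v ! i \<and> lifted_colour e t (v[i := w]) (\<rho>[i := r]) Z = 1}
      = (SIGMA w:?W. {r. r < q \<and> (X w + r) mod q < t})"
    by (auto simp: lifted_colour_def)
  moreover have "card (SIGMA w:?W. {r. r < q \<and> (X w + r) mod q < t}) = (\<Sum>w\<in>?W. t)"
    using card_shift_mod_less[OF q t] by (subst card_SigmaI) auto
  ultimately show ?thesis by (simp add: nbrs_in_S_def)
qed

lemma card_dir_coord_True:
  assumes vS: "v \<in> S" and \<rho>: "length \<rho> = n" and i: "i \<in> dirs_at v"
    and q: "0 < q" and t: "t \<le> q"
  shows "card {(w, r). w < q \<and> r < q \<and> w \<noteq> v ! i
                 \<and> lifted_colour True t (v[i := w]) (\<rho>[i := r]) Z = 1}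
         + q * of_bool (phase True v \<rho> Z < t) = q * t"
proof -
  have fin: "finite (dirs_at v)" using finite_dirs_at[OF vS] .
  have iv: "i < length v" "v ! i < q"
    using vS face_dirs(1)[OF face_of_mem(1)[OF vS]] i by (auto simp: ham_vertices_def)
  define Y where "Y = (\<Sum>l\<in>{..<n} - dirs_at v. \<rho> ! l) + (\<Sum>l\<in>dirs_at v - {i}. v ! l)
    + (\<Sum>j<length Z. Z ! j)"
  have phase_w: "phase True (v[i := w]) (\<rho>[i := r]) Z = (Y + w) mod q" if w: "w < q" for w r
  proof -
    have "face_of (v[i := w]) = face_of v" using update_mem_S[OF vS i w] by blast
    moreover have "(\<Sum>l\<in>{..<n} - dirs_at v. \<rho>[i := r] ! l) = (\<Sum>l\<in>{..<n} - dirs_at v. \<rho> ! l)"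
      using i by (intro sum_nth_update_nonmem) blast
    moreover have "(\<Sum>l\<in>dirs_at v. v[i := w] ! l) = (\<Sum>l\<in>dirs_at v - {i}. v ! l) + w"
      by (rule sum_nth_update_mem[OF fin i iv(1)])
    ultimately show ?thesis by (simp add: phase_def Y_def algebra_simps)
  qed
  have "phase True v \<rho> Z = (Y + v ! i) mod q"
    using sum.remove[OF fin i, of "\<lambda>l. v ! l"] by (simp add: phase_def Y_def algebra_simps)
  moreover have "lifted_colour True t (v[i := w]) (\<rho>[i := r]) Z = 1 \<longleftrightarrow> (Y + w) mod q < t"
    if "w < q" for w r
    using phase_w[OF that] update_mem_S[OF vS i that] by (simp add: lifted_colour_def)
  then have "{(w, r). w < q \<and> r < q \<and> w \<noteq> v ! i
                   \<and> lifted_colour True t (v[i := w]) (\<rho>[i := r]) Z = 1}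
      = {w. w < q \<and> w \<noteq> v ! i \<and> (Y + w) mod q < t} \<times> {..<q}"
    by auto
  moreover have "q * (card {w. w < q \<and> w \<noteq> v ! i \<and> (Y + w) mod q < t}
      + of_bool ((Y + v ! i) mod q < t)) = q * t"
    by (simp only: card_shift_mod_less_neq[OF q t iv(2)])
  ultimately show ?thesis by (simp add: card_cartesian_product distrib_left mult.commute)
qed

lemma card_dir_coord_False:
  assumes vS: "v \<in> S" and \<rho>: "length \<rho> = n" and i: "i \<in> dirs_at v"
  shows "card {(w, r). w < q \<and> r < q \<and> w \<noteq> v ! i
                 \<and> lifted_colour False t (v[i := w]) (\<rho>[i := r]) Z = 1}
         = q * (q - 1) * of_bool (phase False v \<rho> Z < t)"
proof -
  have vi: "v ! i < q"
    using vS face_dirs(1)[OF face_of_mem(1)[OF vS]] i by (auto simp: ham_vertices_def)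
  have "phase False (v[i := w]) (\<rho>[i := r]) Z = phase False v \<rho> Z" if "w < q" for w r
  proof -
    have "face_of (v[i := w]) = face_of v" using update_mem_S[OF vS i that] by blast
    moreover have "(\<Sum>l\<in>{..<n} - dirs_at v. \<rho>[i := r] ! l) = (\<Sum>l\<in>{..<n} - dirs_at v. \<rho> ! l)"
      using i by (intro sum_nth_update_nonmem) blast
    ultimately show ?thesis by (simp add: phase_def)
  qed
  then have "{(w, r). w < q \<and> r < q \<and> w \<noteq> v ! i
                 \<and> lifted_colour False t (v[i := w]) (\<rho>[i := r]) Z = 1}
      = (if phase False v \<rho> Z < t then {w. w < q \<and> w \<noteq> v ! i} \<times> {..<q} else {})"
    using update_mem_S[OF vS i] by (auto simp: lifted_colour_def)
  then show ?thesis using vi by (simp add: card_cartesian_product card_less_neq)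
qed

lemma card_tail_coord:
  assumes vS: "v \<in> S" and j: "j < length Z" "Z ! j < q" and q: "0 < q" and t: "t \<le> q"
  shows "card {z. z < q \<and> z \<noteq> Z ! j \<and> lifted_colour e t v \<rho> (Z[j := z]) = 1}
         + of_bool (phase e v \<rho> Z < t) = t"
proof -
  define W where "W = (\<Sum>l\<in>{..<n} - dirs_at v. \<rho> ! l) + (if e then \<Sum>l\<in>dirs_at v. v ! l else 0)
    + (\<Sum>l\<in>{..<length Z} - {j}. Z ! l)"
  have "phase e v \<rho> Z = (W + Z ! j) mod q"
    using sum.remove[of "{..<length Z}" j "\<lambda>l. Z ! l"] j by (simp add: phase_def W_def algebra_simps)
  moreover have "phase e v \<rho> (Z[j := z]) = (W + z) mod q" for z
    using sum_nth_update_mem[of "{..<length Z}" j Z z] j by (simp add: phase_def W_def algebra_simps)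
  then have "lifted_colour e t v \<rho> (Z[j := z]) = 1 \<longleftrightarrow> (W + z) mod q < t" for z
    using vS by (simp add: lifted_colour_def)
  then have "{z. z < q \<and> z \<noteq> Z ! j \<and> lifted_colour e t v \<rho> (Z[j := z]) = 1}
      = {z. z < q \<and> z \<noteq> Z ! j \<and> (W + z) mod q < t}"
    by presburger
  ultimately show ?thesis
    using card_shift_mod_less_neq[OF q t j(2), of W] by simp
qed

lemma lifted_count1_nonmem:
  assumes v: "v \<in> ham_vertices n q" and nS: "v \<notin> S" and \<rho>: "length \<rho> = n"
    and q: "0 < q" and t: "t \<le> q"
  shows "lifted_count1 e t v \<rho> Z = t * c"
proof -
  have "(\<Sum>i<n. card {(w, r). w < q \<and> r < q \<and> w \<noteq> v ! i
                    \<and> lifted_colour e t (v[i := w]) (\<rho>[i := r]) Z = 1}) = (\<Sum>i<n. t * nbrs_in_S v i)"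
    using face_of_update_dir(1)[OF v] nS by (intro sum.cong refl card_free_coord[OF v \<rho> _ _ q t]) auto
  also have "\<dots> = t * c" unfolding sum_distrib_left[symmetric] sum_nbrs_in_S_of_nonmem[OF v nS] ..
  moreover have "{z. z < q \<and> z \<noteq> Z ! j \<and> lifted_colour e t v \<rho> (Z[j := z]) = 1} = {}" for j
    using nS by (auto simp: lifted_colour_def)
  ultimately show ?thesis unfolding lifted_count1_def by simp
qed

lemma lifted_count1_free_part:
  assumes vS: "v \<in> S" and \<rho>: "length \<rho> = n" and q: "0 < q" and t: "t \<le> q"
  shows "(\<Sum>i\<in>{..<n} - dirs_at v. card {(w, r). w < q \<and> r < q \<and> w \<noteq> v ! i
                               \<and> lifted_colour e t (v[i := w]) (\<rho>[i := r]) Z = 1})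
         + t * (k * (q - 1)) + t * b = t * (n * (q - 1))"
proof -
  let ?K = "dirs_at v"
  have K: "?K \<subseteq> {..<n}" "card ?K = k" using face_dirs[OF face_of_mem(1)[OF vS]] by auto
  have v: "v \<in> ham_vertices n q" using vS by simp
  have "(\<Sum>i\<in>{..<n} - ?K. card {(w, r). w < q \<and> r < q \<and> w \<noteq> v ! i
                               \<and> lifted_colour e t (v[i := w]) (\<rho>[i := r]) Z = 1})
      = t * (\<Sum>i\<in>{..<n} - ?K. nbrs_in_S v i)"
    unfolding sum_distrib_left
  proof (intro sum.cong refl card_free_coord[OF v \<rho> _ _ q t])
    fix i w assume i: "i \<in> {..<n} - ?K" and "w < q" "v[i := w] \<in> S"
    show "i \<notin> dirs_at (v[i := w])"
    proof
      assume "i \<in> dirs_at (v[i := w])"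
      then have "face_of v = face_of (v[i := w])"
        by (rule face_of_update_dir(2)[OF v \<open>v[i := w] \<in> S\<close>])
      with \<open>i \<in> dirs_at (v[i := w])\<close> i show False by simp
    qed
  qed simp
  moreover have "(\<Sum>i\<in>{..<n} - ?K. nbrs_in_S v i) + k * (q - 1) + b = n * (q - 1)"
  proof -
    have "(\<Sum>i\<in>?K. nbrs_in_S v i) = k * (q - 1)" using nbrs_in_S_dir[OF vS] K(2) by simp
    then show ?thesis using sum.subset_diff[OF K(1), of "nbrs_in_S v"] sum_nbrs_in_S_of_mem[OF vS]
      by simp
  qed
  ultimately show ?thesis by (metis add_mult_distrib2)
qed

lemma lifted_count1_tail_part:
  assumes vS: "v \<in> S" and Z: "\<forall>j<length Z. Z ! j < q" and q: "0 < q" and t: "t \<le> q"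
  shows "(\<Sum>j<length Z. card {z. z < q \<and> z \<noteq> Z ! j \<and> lifted_colour e t v \<rho> (Z[j := z]) = 1})
         + length Z * of_bool (phase e v \<rho> Z < t) = length Z * t"
proof -
  have "(\<Sum>j<length Z. card {z. z < q \<and> z \<noteq> Z ! j \<and> lifted_colour e t v \<rho> (Z[j := z]) = 1}
          + of_bool (phase e v \<rho> Z < t)) = (\<Sum>j<length Z. t)"
    using Z by (intro sum.cong refl card_tail_coord[OF vS _ _ q t]) auto
  then show ?thesis by (simp add: sum.distrib)
qed

lemma lifted_count1_mem_True:
  assumes vS: "v \<in> S" and \<rho>: "length \<rho> = n" and Z: "\<forall>j<length Z. Z ! j < q"
    and q: "0 < q" and t: "t \<le> q"
  shows "lifted_count1 True t v \<rho> Z + (k * q + length Z) * of_bool (phase True v \<rho> Z < t)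
           + t * (k * (q - 1)) + t * b
         = k * q * t + t * (n * (q - 1)) + length Z * t"
proof -
  let ?K = "dirs_at v" and ?\<delta> = "of_bool (phase True v \<rho> Z < t) :: nat"
  let ?X = "\<lambda>i. card {(w, r). w < q \<and> r < q \<and> w \<noteq> v ! i
                          \<and> lifted_colour True t (v[i := w]) (\<rho>[i := r]) Z = 1}"
  have K: "?K \<subseteq> {..<n}" "card ?K = k" using face_dirs[OF face_of_mem(1)[OF vS]] by auto
  have split: "(\<Sum>i<n. ?X i) = (\<Sum>i\<in>{..<n} - ?K. ?X i) + (\<Sum>i\<in>?K. ?X i)"
    using sum.subset_diff[OF K(1)] by simp
  have "(\<Sum>i\<in>?K. ?X i + q * ?\<delta>) = (\<Sum>i\<in>?K. q * t)"
    by (intro sum.cong refl card_dir_coord_True[OF vS \<rho> _ q t])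
  then have dirs: "(\<Sum>i\<in>?K. ?X i) + k * (q * ?\<delta>) = k * (q * t)"
    using K(2) by (simp add: sum.distrib)
  show ?thesis
    unfolding lifted_count1_def split
    using dirs lifted_count1_free_part[OF vS \<rho> q t, of True Z]
      lifted_count1_tail_part[OF vS Z q t, of True \<rho>]
    by (simp add: algebra_simps)
qed

lemma lifted_count1_mem_False:
  assumes vS: "v \<in> S" and \<rho>: "length \<rho> = n" and Z: "\<forall>j<length Z. Z ! j < q"
    and q: "0 < q" and t: "t \<le> q"
  shows "lifted_count1 False t v \<rho> Z + length Z * of_bool (phase False v \<rho> Z < t)
           + t * (k * (q - 1)) + t * b
         = k * (q * (q - 1)) * of_bool (phase False v \<rho> Z < t) + t * (n * (q - 1)) + length Z * t"
proof -
  let ?K = "dirs_at v" and ?\<delta> = "of_bool (phase False v \<rho> Z < t) :: nat"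
  let ?X = "\<lambda>i. card {(w, r). w < q \<and> r < q \<and> w \<noteq> v ! i
                          \<and> lifted_colour False t (v[i := w]) (\<rho>[i := r]) Z = 1}"
  have K: "?K \<subseteq> {..<n}" "card ?K = k" using face_dirs[OF face_of_mem(1)[OF vS]] by auto
  have split: "(\<Sum>i<n. ?X i) = (\<Sum>i\<in>{..<n} - ?K. ?X i) + (\<Sum>i\<in>?K. ?X i)"
    using sum.subset_diff[OF K(1)] by simp
  have dirs: "(\<Sum>i\<in>?K. ?X i) = k * (q * (q - 1)) * ?\<delta>"
    using card_dir_coord_False[OF vS \<rho>] K(2) by simp
  show ?thesis
    unfolding lifted_count1_def split dirs
    using lifted_count1_free_part[OF vS \<rho> q t, of False Z]
      lifted_count1_tail_part[OF vS Z q t, of False \<rho>]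
    by linarith
qed

end

subsection \<open>The lifted colouring\<close>

lemma main_eigenvalue_scaled:
  assumes "t \<le> q"
  shows "main_eigenvalue N q (q * (b + c) - t * c) (t * c) = int N * (int q - 1) - int q * (int b + int c)"
proof -
  have "t * c \<le> q * (b + c)" using assms by (simp add: mult_le_mono)
  then show ?thesis by (simp add: main_eigenvalue_def of_nat_diff algebra_simps)
qed

locale face_partitioned_coloring_with_code =
  perfect_code_q q C + face_partitioned_coloring n q k b c f P for n q k b c f P C
begin

definition lifted_coloring :: "bool \<Rightarrow> nat \<Rightarrow> nat \<Rightarrow> nat list \<Rightarrow> nat" where
  "lifted_coloring e t d x = lifted_colour e t (sigma_vec n x) (rho_vec n x) (drop (q * n) x)"

lemma lifted_coloring_cases: "lifted_coloring e t d x = 1 \<or> lifted_coloring e t d x = 2"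
  by (simp add: lifted_coloring_def lifted_colour_def)

lemma card_lifted_coloring_nbrs1:
  assumes x: "x \<in> ham_vertices (q * n + d) q"
  shows "card {y \<in> ham_nbrs (q * n + d) q x. lifted_coloring e t d y = 1}
         = lifted_count1 e t (sigma_vec n x) (rho_vec n x) (drop (q * n) x)"
  using card_ham_nbrs_lift[OF x, of "\<lambda>v \<rho> Z. lifted_colour e t v \<rho> Z = 1"] x
  by (simp add: lifted_coloring_def lifted_count1_def ham_vertices_def)

text \<open>\<open>q * n + d\<close> is the length in case (1) (\<open>e\<close>) resp. case (2) (\<open>\<not> e\<close>) of the theorem.\<close>
definition tail_balances :: "bool \<Rightarrow> nat \<Rightarrow> bool" where
  "tail_balances e d \<longleftrightarrow>
     (if e then d + n * (q - 1) + k = b + c else d + n * (q - 1) = k * (q - 1) + b + c)"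

lemma lifted_count1_mem:
  assumes vS: "v \<in> S" and \<rho>: "length \<rho> = n" and Z: "Z \<in> ham_vertices d q" and t: "t \<le> q"
    and d: "tail_balances e d"
  shows "lifted_count1 e t v \<rho> Z + (if e then k * q + d else d) * of_bool (phase e v \<rho> Z < t)
         = t * c + (if e then 0 else k * (q * (q - 1)) * of_bool (phase e v \<rho> Z < t))"
proof -
  obtain m where m: "q = Suc m" using one_le_q by (cases q) auto
  have Z': "length Z = d" "\<forall>j<length Z. Z ! j < q" using Z by (auto simp: ham_vertices_def)
  show ?thesis
  proof (cases e)
    case True
    have "t * (d + n * m + k) = t * (b + c)" using d[unfolded tail_balances_def] True m by simp
    then show ?thesis
      using lifted_count1_mem_True[OF vS \<rho> Z'(2) _ t] True Z'(1) m by (simp add: algebra_simps)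
  next
    case False
    have "t * (d + n * m) = t * (k * m + b + c)" using d[unfolded tail_balances_def] False m by simp
    then show ?thesis
      using lifted_count1_mem_False[OF vS \<rho> Z'(2) _ t] False Z'(1) m by (simp add: algebra_simps)
  qed
qed

lemma lifted_coloring_nbrs_of_colour2:
  assumes x: "x \<in> ham_vertices (q * n + d) q" and t: "t \<le> q"
    and d: "tail_balances e d"
    and colour2: "lifted_coloring e t d x = 2"
  shows "card {y \<in> ham_nbrs (q * n + d) q x. lifted_coloring e t d y = 1} = t * c"
proof -
  let ?v = "sigma_vec n x" and ?\<rho> = "rho_vec n x" and ?Z = "drop (q * n) x"
  have Z: "?Z \<in> ham_vertices d q" using x by (auto simp: ham_vertices_def)
  have \<rho>: "length ?\<rho> = n" by simp
  have "\<not> (?v \<in> S \<and> phase e ?v ?\<rho> ?Z < t)"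
    using colour2 unfolding lifted_coloring_def lifted_colour_eq_1[symmetric] by simp
  then consider "?v \<notin> S" | "?v \<in> S" "\<not> phase e ?v ?\<rho> ?Z < t" by blast
  then have "lifted_count1 e t ?v ?\<rho> ?Z = t * c"
  proof cases
    case 1
    then show ?thesis
      using lifted_count1_nonmem[OF sigma_vec_in_ham_vertices _ \<rho> _ t] two_le_q by simp
  next
    case 2
    then have "of_bool (phase e ?v ?\<rho> ?Z < t) = (0::nat)" by simp
    then show ?thesis
      using lifted_count1_mem[OF 2(1) \<rho> Z t d] by (simp only: mult_0_right add_0_right if_cancel)
  qed
  then show ?thesis using card_lifted_coloring_nbrs1[OF x] by simp
qed

lemma lifted_coloring_nbrs_of_colour1:
  assumes x: "x \<in> ham_vertices (q * n + d) q" and t: "t \<le> q"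
    and d: "tail_balances e d"
    and colour1: "lifted_coloring e t d x = 1"
  shows "card {y \<in> ham_nbrs (q * n + d) q x. lifted_coloring e t d y = 2} = q * (b + c) - t * c"
proof -
  let ?v = "sigma_vec n x" and ?\<rho> = "rho_vec n x" and ?Z = "drop (q * n) x"
  let ?c1 = "card {y \<in> ham_nbrs (q * n + d) q x. lifted_coloring e t d y = 1}"
  let ?c2 = "card {y \<in> ham_nbrs (q * n + d) q x. lifted_coloring e t d y = 2}"
  have c12: "?c1 + ?c2 = (q * n + d) * (q - 1)"
    using card_ham_nbrs_two_colours[OF x, of "lifted_coloring e t d"] lifted_coloring_cases by simp
  have Z: "?Z \<in> ham_vertices d q" using x by (auto simp: ham_vertices_def)
  have \<rho>: "length ?\<rho> = n" by simp
  have vS: "?v \<in> S" and "phase e ?v ?\<rho> ?Z < t"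
    using colour1 unfolding lifted_coloring_def lifted_colour_eq_1 by auto
  then have "of_bool (phase e ?v ?\<rho> ?Z < t) = (1::nat)" by simp
  then have count: "?c1 + (if e then k * q + d else d) = t * c + (if e then 0 else k * (q * (q - 1)))"
    using lifted_count1_mem[OF vS \<rho> Z t d] unfolding card_lifted_coloring_nbrs1[OF x]
    by (simp only: mult_1_right)
  obtain m where m: "q = Suc m" using one_le_q by (cases q) auto
  have "?c2 + t * c = q * (b + c)"
  proof (cases e)
    case True
    have "Suc m * (d + n * m + k) = Suc m * (b + c)"
      using d[unfolded tail_balances_def] True m by simp
    then show ?thesis using count c12 True m by (simp add: algebra_simps)
  next
    case False
    have "Suc m * (d + n * m) = Suc m * (k * m + b + c)"
      using d[unfolded tail_balances_def] False m by simp
    then show ?thesis using count c12 False m by (simp add: algebra_simps)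
  qed
  then show ?thesis by simp
qed

lemma lifted_coloring_image:
  assumes t: "1 \<le> t"
  shows "lifted_coloring e t d ` ham_vertices (q * n + d) q = {1, 2}"
proof
  show "lifted_coloring e t d ` ham_vertices (q * n + d) q \<subseteq> {1, 2}"
    using lifted_coloring_cases by auto
  have zeros: "replicate m 0 \<in> ham_vertices m q" for m using two_le_q by (simp add: ham_vertices_def)
  have "2 \<in> f ` ham_vertices n q" using coloring by (simp add: is_coloring_def)
  then obtain v0 where v0: "v0 \<in> ham_vertices n q" "f v0 = 2" by (auto elim: imageE)
  have "1 \<in> f ` ham_vertices n q" using coloring by (simp add: is_coloring_def)
  then obtain v1 where v1: "v1 \<in> S" by (auto elim: imageE)
  obtain x0 where x0: "x0 \<in> ham_vertices (q * n + d) q" "sigma_vec n x0 = v0"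
    "rho_vec n x0 = replicate n 0" "drop (q * n) x0 = replicate d 0"
    by (rule exists_word_sigma_rho_tail[OF v0(1) zeros zeros])
  have "lifted_coloring e t d x0 = 2"
    using x0(2) v0(2) by (simp add: lifted_coloring_def lifted_colour_def)
  obtain l where l: "l < n" "l \<notin> dirs_at v1" by (rule exists_free_dir[OF v1])
  define E where "E = (if e then \<Sum>l\<in>dirs_at v1. v1 ! l else 0)"
  have "0 \<in> (\<lambda>r. (E + r) mod q) ` {..<q}"
    using bij_betw_imp_surj_on[OF bij_betw_shift_mod[of q E]] two_le_q by simp
  then obtain r where "r \<in> {..<q}" "0 = (E + r) mod q" by (rule imageE)
  then have r: "r < q" "(E + r) mod q = 0" by simp_all
  define \<rho> where "\<rho> = (replicate n 0)[l := r]"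
  have \<rho>: "\<rho> \<in> ham_vertices n q"
    unfolding \<rho>_def using list_update_in_ham_vertices[OF zeros r(1)] .
  obtain x1 where x1: "x1 \<in> ham_vertices (q * n + d) q" "sigma_vec n x1 = v1" "rho_vec n x1 = \<rho>"
    "drop (q * n) x1 = replicate d 0"
  proof (rule exists_word_sigma_rho_tail[OF _ \<rho> zeros])
    show "v1 \<in> ham_vertices n q" using v1 by simp
  qed
  have "(\<Sum>i\<in>{..<n} - dirs_at v1. \<rho> ! i) = r"
    using sum_nth_update_mem[of "{..<n} - dirs_at v1" l "replicate n 0" r] l by (simp add: \<rho>_def)
  then have "phase e v1 \<rho> (replicate d 0) = 0"
    using r(2) by (simp add: phase_def E_def add.commute)
  then have "lifted_coloring e t d x1 = 1"
    using x1(2-4) v1 t by (simp add: lifted_coloring_def lifted_colour_def)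
  then show "{1, 2} \<subseteq> lifted_coloring e t d ` ham_vertices (q * n + d) q"
    using \<open>lifted_coloring e t d x0 = 2\<close> x0(1) x1(1) by (auto intro: rev_image_eqI)
qed

lemma is_coloring_lifted:
  assumes t: "1 \<le> t" "t \<le> q"
    and d: "tail_balances e d"
  shows "is_coloring (q * n + d) q (q * (b + c) - t * c) (t * c) (lifted_coloring e t d)"
  unfolding is_coloring_def
  using lifted_coloring_image[OF t(1)] lifted_coloring_nbrs_of_colour1[OF _ t(2) d]
    lifted_coloring_nbrs_of_colour2[OF _ t(2) d] by blast

lemma exists_coloring_eigenvalue_minus:
  assumes "main_eigenvalue n q b c + int k \<le> 0" and t: "t \<in> {1..q}"
  defines "N \<equiv> nat (int q * int n - main_eigenvalue n q b c - int k)"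
  shows "\<exists>g. is_coloring N q (q * (b + c) - t * c) (t * c) g
           \<and> main_eigenvalue N q (q * (b + c) - t * c) (t * c)
               = main_eigenvalue n q b c - int k * (int q - 1)"
proof -
  have t_le: "t \<le> q" using t by simp
  define d where "d = b + c - n * (q - 1) - k"
  have "int (n * (q - 1)) + int k \<le> int b + int c"
    using assms(1) one_le_q by (simp add: main_eigenvalue_def of_nat_diff)
  then have "n * (q - 1) + k \<le> b + c" by linarith
  then have d_eq: "d + n * (q - 1) + k = b + c" by (simp add: d_def)
  then have "int (d + n * (q - 1) + k) = int (b + c)" by (rule arg_cong)
  then have "int d + int n * int (q - 1) + int k = int b + int c" by (simp only: of_nat_add of_nat_mult)
  then have d_int: "int d = int b + int c - int n * (int q - 1) - int k"
    using one_le_q by (simp add: of_nat_diff)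
  then have "int q * int n - main_eigenvalue n q b c - int k = int (q * n + d)"
    by (simp add: main_eigenvalue_def algebra_simps)
  then have "N = q * n + d" unfolding N_def by (simp only: nat_int)
  moreover have "main_eigenvalue (q * n + d) q (q * (b + c) - t * c) (t * c)
      = main_eigenvalue n q b c - int k * (int q - 1)"
    unfolding main_eigenvalue_scaled[OF t_le] of_nat_add of_nat_mult d_int
    by (simp add: main_eigenvalue_def algebra_simps)
  ultimately show ?thesis
    using is_coloring_lifted[of t True d] t d_eq by (auto simp: tail_balances_def)
qed

lemma exists_coloring_eigenvalue_plus:
  assumes "main_eigenvalue n q b c \<le> int k * (int q - 1)" and t: "t \<in> {1..q}"
  defines "N \<equiv> nat (int q * int n - main_eigenvalue n q b c + int k * (int q - 1))"
  shows "\<exists>g. is_coloring N q (q * (b + c) - t * c) (t * c) g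
           \<and> main_eigenvalue N q (q * (b + c) - t * c) (t * c)
               = main_eigenvalue n q b c + int k * (int q - 1)^2"
proof -
  have t_le: "t \<le> q" using t by simp
  define d where "d = k * (q - 1) + b + c - n * (q - 1)"
  have "int (n * (q - 1)) \<le> int (k * (q - 1)) + int b + int c"
    using assms(1) one_le_q by (simp add: main_eigenvalue_def of_nat_diff)
  then have "n * (q - 1) \<le> k * (q - 1) + b + c" by linarith
  then have d_eq: "d + n * (q - 1) = k * (q - 1) + b + c" by (simp add: d_def)
  then have "int (d + n * (q - 1)) = int (k * (q - 1) + b + c)" by (rule arg_cong)
  then have "int d + int n * int (q - 1) = int k * int (q - 1) + int b + int c"
    by (simp only: of_nat_add of_nat_mult)
  then have d_int: "int d = int k * (int q - 1) + int b + int c - int n * (int q - 1)"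
    using one_le_q by (simp add: of_nat_diff)
  then have "int q * int n - main_eigenvalue n q b c + int k * (int q - 1) = int (q * n + d)"
    by (simp add: main_eigenvalue_def algebra_simps)
  then have "N = q * n + d" unfolding N_def by (simp only: nat_int)
  moreover have "main_eigenvalue (q * n + d) q (q * (b + c) - t * c) (t * c)
      = main_eigenvalue n q b c + int k * (int q - 1)^2"
    unfolding main_eigenvalue_scaled[OF t_le] of_nat_add of_nat_mult d_int
    by (simp add: main_eigenvalue_def algebra_simps power2_eq_square)
  ultimately show ?thesis
    using is_coloring_lifted[of t False d] t d_eq by (auto simp: tail_balances_def)
qed

end

theorem theorem7:
  fixes n q b c k :: nat and f :: "nat list \<Rightarrow> nat"
  assumes code: "\<exists>C. perfect_code1 (q + 1) q C"
    and col: "is_coloring n q b c f"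
    and faces: "face_partitionable n q k {x \<in> ham_vertices n q. f x = 1}"
  shows "(main_eigenvalue n q b c + int k \<le> 0 \<longrightarrow>
            (\<forall>t\<in>{1..q}. \<exists>g. is_coloring
               (nat (int q * int n - main_eigenvalue n q b c - int k)) q (q * (b + c) - t * c) (t * c) g
             \<and> main_eigenvalue (nat (int q * int n - main_eigenvalue n q b c - int k)) q
                  (q * (b + c) - t * c) (t * c)
                = main_eigenvalue n q b c - int k * (int q - 1)))
       \<and> (main_eigenvalue n q b c \<le> int k * (int q - 1) \<longrightarrow>
            (\<forall>t\<in>{1..q}. \<exists>g. is_coloring
               (nat (int q * int n - main_eigenvalue n q b c + int k * (int q - 1))) q (q * (b + c) - t * c) (t * c) g
             \<and> main_eigenvalue (nat (int q * int n - main_eigenvalue n q b c + int k * (int q - 1))) q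
                  (q * (b + c) - t * c) (t * c)
                = main_eigenvalue n q b c + int k * (int q - 1)^2))"
proof -
  obtain C where C: "perfect_code1 (Suc q) q C" using code by auto
  obtain P where P: "\<forall>F\<in>P. is_face n q k F" "\<forall>F\<in>P. \<forall>G\<in>P. F \<noteq> G \<longrightarrow> F \<inter> G = {}"
    "\<Union>P = {x \<in> ham_vertices n q. f x = 1}"
    using faces unfolding face_partitionable_def by metis
  interpret face_partitioned_coloring_with_code n q k b c f P C
    by unfold_locales (fact C is_coloring_imp_two_le[OF col] col P)+
  show ?thesis
    by (intro conjI impI ballI exists_coloring_eigenvalue_minus exists_coloring_eigenvalue_plus)
qed

end
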